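(* Let $G=(V,E)$ be a moral DAG and $\pi$ an arbitrary topological ordering of $G$. Let $S=\{s_1,\dots,s_k\}\subseteq V$ with $\pi(s_1)<\pi(s_2)<\dots<\pi(s_k)$. Then every arc $u\to v$ of $G$ with $s_1\in \mathrm{Des}(u)\cap\mathrm{Anc}(v)$ is oriented (directed) in the interventional essential graph $\mathcal{E}_{\{S\}}(G)$.
   Context: A moral DAG is a DAG without v-structures ($u\to x\leftarrow y$ with $u,y$ nonadjacent). $\mathrm{Des}(u)$ and $\mathrm{Anc}(v)$ denote the (strict) descendants of $u$ and ancestors of $v$ in $G$. The interventional essential graph $\mathcal{E}_{\{S\}}(G)$ of the single intervention $S$ is obtained from the skeleton of $G$ by orienting, as in $G$, every edge with exactly one endpoint in $S$ (there are no v-structures), then repeatedly applying Meek rules until none applies: R1 orients $a - b$ as $a\to b$ if $c\to a$ with $c,b$ nonadjacent; R2 if $a\to c\to b$; R3 if $d - a - c$, $d\to b\leftarrow c$, $c,d$ nonadjacent; R4 if $d - a - c$, $d\to c\to b$, $b,d$ nonadjacent. *)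

theory Defs
  imports Main
begin

definition dag :: "'a set \<Rightarrow> ('a \<times> 'a) set \<Rightarrow> bool" where
  "dag V E \<longleftrightarrow> finite V \<and> E \<subseteq> V \<times> V \<and> acyclic E"

definition adj :: "('a \<times> 'a) set \<Rightarrow> 'a \<Rightarrow> 'a \<Rightarrow> bool" where
  "adj E x y \<longleftrightarrow> (x, y) \<in> E \<or> (y, x) \<in> E"

definition moral :: "('a \<times> 'a) set \<Rightarrow> bool" where
  "moral E \<longleftrightarrow> (\<forall>u x y. (u, x) \<in> E \<and> (y, x) \<in> E \<and> u \<noteq> y \<longrightarrow> adj E u y)"

definition topological_ordering :: "'a set \<Rightarrow> ('a \<times> 'a) set \<Rightarrow> ('a \<Rightarrow> nat) \<Rightarrow> bool" where
  "topological_ordering V E \<pi> \<longleftrightarrow> inj_on \<pi> V \<and> (\<forall>(u, v) \<in> E. \<pi> u < \<pi> v)"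

definition Des :: "('a \<times> 'a) set \<Rightarrow> 'a \<Rightarrow> 'a set" where
  "Des E u = {x. (u, x) \<in> E\<^sup>+}"

definition Anc :: "('a \<times> 'a) set \<Rightarrow> 'a \<Rightarrow> 'a set" where
  "Anc E v = {x. (x, v) \<in> E\<^sup>+}"

text \<open>Partially directed graphs: skeleton of E, plus the set D of oriented pairs.
  An edge x - y is undirected in state D if it is in the skeleton and not oriented either way.\<close>

definition undir :: "('a \<times> 'a) set \<Rightarrow> ('a \<times> 'a) set \<Rightarrow> 'a \<Rightarrow> 'a \<Rightarrow> bool" where
  "undir E D x y \<longleftrightarrow> adj E x y \<and> (x, y) \<notin> D \<and> (y, x) \<notin> D"

definition meek_R1 :: "('a \<times> 'a) set \<Rightarrow> ('a \<times> 'a) set \<Rightarrow> 'a \<Rightarrow> 'a \<Rightarrow> bool" where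
  "meek_R1 E D a b \<longleftrightarrow> undir E D a b \<and> (\<exists>c. (c, a) \<in> D \<and> c \<noteq> b \<and> \<not> adj E c b)"

definition meek_R2 :: "('a \<times> 'a) set \<Rightarrow> ('a \<times> 'a) set \<Rightarrow> 'a \<Rightarrow> 'a \<Rightarrow> bool" where
  "meek_R2 E D a b \<longleftrightarrow> undir E D a b \<and> (\<exists>c. (a, c) \<in> D \<and> (c, b) \<in> D)"

definition meek_R3 :: "('a \<times> 'a) set \<Rightarrow> ('a \<times> 'a) set \<Rightarrow> 'a \<Rightarrow> 'a \<Rightarrow> bool" where
  "meek_R3 E D a b \<longleftrightarrow> undir E D a b \<and>
     (\<exists>c d. undir E D d a \<and> undir E D a c \<and> (d, b) \<in> D \<and> (c, b) \<in> D
            \<and> c \<noteq> d \<and> \<not> adj E c d)"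

definition meek_R4 :: "('a \<times> 'a) set \<Rightarrow> ('a \<times> 'a) set \<Rightarrow> 'a \<Rightarrow> 'a \<Rightarrow> bool" where
  "meek_R4 E D a b \<longleftrightarrow> undir E D a b \<and>
     (\<exists>c d. undir E D d a \<and> undir E D a c \<and> (d, c) \<in> D \<and> (c, b) \<in> D
            \<and> b \<noteq> d \<and> \<not> adj E b d)"

definition meek_applies :: "('a \<times> 'a) set \<Rightarrow> ('a \<times> 'a) set \<Rightarrow> 'a \<Rightarrow> 'a \<Rightarrow> bool" where
  "meek_applies E D a b \<longleftrightarrow> meek_R1 E D a b \<or> meek_R2 E D a b \<or> meek_R3 E D a b \<or> meek_R4 E D a b"

definition meek_step :: "('a \<times> 'a) set \<Rightarrow> ('a \<times> 'a) set \<Rightarrow> ('a \<times> 'a) set \<Rightarrow> bool" where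
  "meek_step E D D' \<longleftrightarrow> (\<exists>a b. meek_applies E D a b \<and> D' = insert (a, b) D)"

definition interv_init :: "('a \<times> 'a) set \<Rightarrow> 'a set \<Rightarrow> ('a \<times> 'a) set" where
  "interv_init E S = {(x, y) \<in> E. (x \<in> S) \<noteq> (y \<in> S)}"

text \<open>D is (the set of directed arcs of) an interventional essential graph E_{S}(G):
  obtained from the initial orientation by repeatedly applying Meek rules until none applies.\<close>
definition interv_essential :: "('a \<times> 'a) set \<Rightarrow> 'a set \<Rightarrow> ('a \<times> 'a) set \<Rightarrow> bool" where
  "interv_essential E S D \<longleftrightarrow>
     (meek_step E)\<^sup>*\<^sup>* (interv_init E S) D \<and> (\<forall>a b. \<not> meek_applies E D a b)"

end

theory Submission
  imports Defs
begin

text \<open>Let \<open>x \<rightarrow> y\<close> be an arc with \<open>x \<in> Anc(s\<^sub>1)\<close> and \<open>y\<close> a (reflexive) descendant of \<open>s\<^sub>1\<close>;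
  induct on the position of \<open>y\<close>. If \<open>y \<in> S\<close>, the arc is oriented initially, since \<open>x\<close> precedes
  the first intervened vertex. Otherwise \<open>y\<close> has a parent \<open>z\<close> below \<open>s\<^sub>1\<close> with \<open>z \<rightarrow> y\<close> already
  oriented: taking \<open>z\<close> earliest, either \<open>z \<in> S\<close>, or \<open>z\<close> itself has an oriented parent \<open>w\<close>
  not adjacent to \<open>y\<close> and R1 fires. Morality forces \<open>x \<rightarrow> z\<close>, oriented by induction, and R2 then
  orients \<open>x \<rightarrow> y\<close>.\<close>

lemma trancl_order_less:
  assumes "\<And>x y. (x, y) \<in> E \<Longrightarrow> \<pi> x < (\<pi> y :: nat)" and "(x, y) \<in> E\<^sup>+"
  shows "\<pi> x < \<pi> y"
  using assms(2) by (induction rule: trancl_induct) (auto dest: assms(1))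

lemma rtrancl_order_le:
  assumes "\<And>x y. (x, y) \<in> E \<Longrightarrow> \<pi> x < (\<pi> y :: nat)" and "(x, y) \<in> E\<^sup>*"
  shows "\<pi> x \<le> \<pi> y"
  using assms(2) by (induction rule: rtrancl_induct) (auto dest: assms(1))

locale ordered_moral_graph =
  fixes E :: "('a \<times> 'a) set" and \<pi> :: "'a \<Rightarrow> nat"
  assumes moral: "moral E"
    and order: "\<And>x y. (x, y) \<in> E \<Longrightarrow> \<pi> x < \<pi> y"
begin

lemma common_child_adj: "(x, z) \<in> E \<Longrightarrow> (y, z) \<in> E \<Longrightarrow> x \<noteq> y \<Longrightarrow> adj E x y"
  using moral unfolding moral_def by blast

lemma adj_order_arc: "adj E x y \<Longrightarrow> \<pi> x < \<pi> y \<Longrightarrow> (x, y) \<in> E"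
  using order unfolding adj_def by fastforce

text \<open>Starting from arcs of \<open>E\<close>, no Meek rule can orient an edge against \<open>E\<close>: each rule
  applied to a reversed arc would produce either a cycle or a v-structure.\<close>
lemma meek_applies_arc:
  assumes sub: "D \<subseteq> E" and ap: "meek_applies E D a b"
  shows "(a, b) \<in> E"
proof (rule ccontr)
  assume "(a, b) \<notin> E"
  moreover have "adj E a b"
    using ap unfolding meek_applies_def meek_R1_def meek_R2_def meek_R3_def meek_R4_def undir_def
    by blast
  ultimately have ba: "(b, a) \<in> E" unfolding adj_def by blast
  have D_order: "\<And>x y. (x, y) \<in> D \<Longrightarrow> \<pi> x < \<pi> y" using sub order by blast
  from ap show False unfolding meek_applies_def
  proof (elim disjE)
    assume "meek_R1 E D a b"
    then obtain c where "(c, a) \<in> D" "c \<noteq> b" "\<not> adj E c b" unfolding meek_R1_def by blast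
    thus False using common_child_adj ba sub by blast
  next
    assume "meek_R2 E D a b"
    then obtain c where "(a, c) \<in> D" "(c, b) \<in> D" unfolding meek_R2_def by blast
    hence "\<pi> a < \<pi> c" "\<pi> c < \<pi> b" using D_order by blast+
    thus False using order[OF ba] by simp
  next
    assume "meek_R3 E D a b"
    then obtain c d where h: "adj E d a" "adj E c a" "(d, b) \<in> D" "(c, b) \<in> D"
      "c \<noteq> d" "\<not> adj E c d"
      unfolding meek_R3_def undir_def adj_def by blast
    have "\<pi> d < \<pi> a" "\<pi> c < \<pi> a" using h D_order order[OF ba] by fastforce+
    hence "(d, a) \<in> E" "(c, a) \<in> E" using h adj_order_arc by blast+
    thus False using common_child_adj h by blast
  next
    assume "meek_R4 E D a b"
    then obtain c d where h: "adj E d a" "(d, c) \<in> D" "(c, b) \<in> D" "b \<noteq> d" "\<not> adj E b d"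
      unfolding meek_R4_def undir_def by blast
    have "\<pi> d < \<pi> c" "\<pi> c < \<pi> b" using h D_order by blast+
    hence "\<pi> d < \<pi> a" using order[OF ba] by simp
    hence "(d, a) \<in> E" using h adj_order_arc by blast
    thus False using common_child_adj h ba by blast
  qed
qed

lemma meek_steps_arcs:
  assumes "(meek_step E)\<^sup>*\<^sup>* D0 D" and "D0 \<subseteq> E"
  shows "D \<subseteq> E"
  using assms
  by (induction rule: rtranclp_induct) (auto simp: meek_step_def dest: meek_applies_arc)

lemma meek_steps_mono:
  assumes "(meek_step E)\<^sup>*\<^sup>* D0 D"
  shows "D0 \<subseteq> D"
  using assms by (induction rule: rtranclp_induct) (auto simp: meek_step_def)

lemma interv_essential_arcs:
  assumes "interv_essential E S D"
  shows "D \<subseteq> E" and "interv_init E S \<subseteq> D"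
proof -
  have "interv_init E S \<subseteq> E" unfolding interv_init_def by blast
  thus "D \<subseteq> E" using assms meek_steps_arcs unfolding interv_essential_def by blast
  show "interv_init E S \<subseteq> D" using assms meek_steps_mono unfolding interv_essential_def by blast
qed

end

locale interventional_essential_graph = ordered_moral_graph +
  fixes S :: "'a set" and D :: "('a \<times> 'a) set"
  assumes essential: "interv_essential E S D"
begin

lemma arcs: "D \<subseteq> E" and init_arcs: "interv_init E S \<subseteq> D"
  using interv_essential_arcs essential by blast+

lemma init_arc: "(x, y) \<in> E \<Longrightarrow> (x \<in> S) \<noteq> (y \<in> S) \<Longrightarrow> (x, y) \<in> D"
  using init_arcs unfolding interv_init_def by blast

lemma unoriented_arc_undir:
  assumes "(x, y) \<in> E" and "(x, y) \<notin> D"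
  shows "undir E D x y"
proof -
  have "(y, x) \<notin> D"
  proof
    assume "(y, x) \<in> D"
    hence "\<pi> y < \<pi> x" using arcs order by blast
    thus False using order[OF assms(1)] by simp
  qed
  thus ?thesis using assms unfolding undir_def adj_def by blast
qed

lemma R1_closed:
  assumes "(w, x) \<in> D" and "(x, y) \<in> E" and "w \<noteq> y" and "\<not> adj E w y"
  shows "(x, y) \<in> D"
proof (rule ccontr)
  assume "(x, y) \<notin> D"
  hence "meek_R1 E D x y" using assms unoriented_arc_undir unfolding meek_R1_def by blast
  thus False using essential unfolding interv_essential_def meek_applies_def by blast
qed

lemma R2_closed:
  assumes "(x, z) \<in> D" and "(z, y) \<in> D" and "(x, y) \<in> E"
  shows "(x, y) \<in> D"
proof (rule ccontr)
  assume "(x, y) \<notin> D"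
  hence "meek_R2 E D x y" using assms unoriented_arc_undir unfolding meek_R2_def by blast
  thus False using essential unfolding interv_essential_def meek_applies_def by blast
qed

text \<open>The parent \<open>z\<close> is chosen \<open>\<pi>\<close>-minimal among the parents of \<open>y\<close> below \<open>s\<^sub>1\<close>; this makes
  the oriented parent \<open>w\<close> of \<open>z\<close> nonadjacent to \<open>y\<close>, so that R1 applies.\<close>
lemma descendant_has_oriented_parent:
  assumes "s1 \<in> S" and "y \<notin> S" and "(s1, y) \<in> E\<^sup>+"
  shows "\<exists>z. (s1, z) \<in> E\<^sup>* \<and> (z, y) \<in> D"
  using assms(2,3)
proof (induction "\<pi> y" arbitrary: y rule: less_induct)
  case less
  let ?parent = "\<lambda>z. (s1, z) \<in> E\<^sup>* \<and> (z, y) \<in> E"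
  obtain z0 where "?parent z0" using less.prems(2) by (metis tranclD2)
  then obtain z where z: "?parent z" and z_min: "\<And>z'. ?parent z' \<Longrightarrow> \<pi> z \<le> \<pi> z'"
    using ex_has_least_nat[of ?parent z0 \<pi>] by blast
  have zy: "\<pi> z < \<pi> y" using z order by blast
  show ?case
  proof (cases "z \<in> S")
    case True
    thus ?thesis using z less.prems(1) init_arc by blast
  next
    case False
    with assms(1) z have "(s1, z) \<in> E\<^sup>+" by (metis rtranclD)
    then obtain w where w: "(s1, w) \<in> E\<^sup>*" "(w, z) \<in> D"
      using less.hyps[OF zy False] by blast
    have wz: "\<pi> w < \<pi> z" using w(2) arcs order by blast
    have "\<not> adj E w y"
    proof
      assume "adj E w y"
      moreover have "(y, w) \<notin> E" using order wz zy by fastforce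
      ultimately have "?parent w" using w(1) unfolding adj_def by blast
      thus False using z_min wz by fastforce
    qed
    moreover have "w \<noteq> y" using wz zy by fastforce
    ultimately have "(z, y) \<in> D" using R1_closed w(2) z by blast
    thus ?thesis using z by blast
  qed
qed

lemma ancestor_arc_oriented:
  assumes "s1 \<in> S" and s1_first: "\<forall>s \<in> S. \<pi> s1 \<le> \<pi> s"
    and "(x, s1) \<in> E\<^sup>+" and "(x, y) \<in> E" and "(s1, y) \<in> E\<^sup>*"
  shows "(x, y) \<in> D"
  using assms(4,5)
proof (induction "\<pi> y" arbitrary: y rule: less_induct)
  case less
  have xs1: "\<pi> x < \<pi> s1" using trancl_order_less[OF order assms(3)] .
  hence "x \<notin> S" using s1_first by fastforce
  show ?case
  proof (cases "y \<in> S")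
    case True
    thus ?thesis using \<open>x \<notin> S\<close> less.prems(1) init_arc by blast
  next
    case False
    with assms(1) less.prems(2) have "(s1, y) \<in> E\<^sup>+" by (metis rtranclD)
    then obtain z where z: "(s1, z) \<in> E\<^sup>*" "(z, y) \<in> D"
      using descendant_has_oriented_parent[OF assms(1) False] by blast
    have s1z: "\<pi> s1 \<le> \<pi> z" using rtrancl_order_le[OF order z(1)] .
    have zy: "(z, y) \<in> E" using z(2) arcs by blast
    have "adj E x z" using common_child_adj[OF less.prems(1) zy] xs1 s1z by fastforce
    hence "(x, z) \<in> E" using adj_order_arc xs1 s1z by simp
    hence "(x, z) \<in> D" using less.hyps order[OF zy] z(1) by blast
    thus ?thesis using R2_closed z(2) less.prems(1) by blast
  qed
qed

end

theorem mainTheorem5: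
  fixes V :: "'a set" and E :: "('a \<times> 'a) set" and \<pi> :: "'a \<Rightarrow> nat"
    and S :: "'a set" and s1 u v :: 'a
  assumes "dag V E"
    and "moral E"
    and "topological_ordering V E \<pi>"
    and "S \<subseteq> V"
    and "s1 \<in> S"
    and "\<forall>s \<in> S. \<pi> s1 \<le> \<pi> s"
    and "(u, v) \<in> E"
    and "s1 \<in> Des E u \<inter> Anc E v"
    and "interv_essential E S D"
  shows "(u, v) \<in> D"
proof -
  interpret interventional_essential_graph E \<pi> S D
    using assms(2,3,9) unfolding topological_ordering_def
    by unfold_locales blast+
  have "(u, s1) \<in> E\<^sup>+" and "(s1, v) \<in> E\<^sup>*"
    using assms(8) unfolding Des_def Anc_def by auto
  thus ?thesis using ancestor_arc_oriented assms(5,6,7) by blast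
qed

end
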